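(* Let $G$ be a finite solvable group and let $1=H_0 \triangleleft H_1\triangleleft\cdots\triangleleft H_m=G$ be a strictly ascending series of normal subgroups of $G$ such that $H_i=\gamma_{k_i}(H_{i+1})$ with $k_i\in\mathbb{N}\cup\{\infty\}$ for $i\in\{1,\dots,m-1\}$ and $k_0=\infty$. Let $c=\lvert\{i\in\{1,\dots,m-1\}:k_i=\infty\}\rvert$ and $C=\prod_{k_i<\infty}(k_i+1)$, and set $D=c/C^{1/c}$. Then the $n$-input AND function can be computed by a $G$-program of length $O(2^{Dn^{1/c}})$. More precisely, for every $n\in\mathbb{N}$ there exist $1\neq g\in G$ and a $G$-program $Q_n$ over variables $B_1,\dots,B_n$ of length $O(2^{Dn^{1/c}})$ such that for every assignment $\sigma:\{B_1,\dots,B_n\}\to\{0,1\}$, $\sigma(Q_n)=g$ if $\sigma(B_1)=\cdots=\sigma(B_n)=1$ and $\sigma(Q_n)=1$ otherwise.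
   Context: Commutators: $[x,y]=x^{-1}y^{-1}xy$; for subgroups $A,B$, $[A,B]$ is the subgroup generated by all $[a,b]$, and $[A_1,\dots,A_k]=[[A_1,\dots,A_{k-1}],A_k]$. For a group $H$ and $k\in\mathbb{N}$, $\gamma_kH=[H,H,\dots,H]$ with $k+1$ copies of $H$ (so $\gamma_1H=[H,H]$), and $\gamma_\infty H$ (the nilpotent residual) is $\gamma_iH$ for all sufficiently large $i$. An $n$-input $G$-program of length $\ell$ is a sequence $\langle B_{i_1},a_1,b_1\rangle\cdots\langle B_{i_\ell},a_\ell,b_\ell\rangle$ with $B_{i_j}\in\{B_1,\dots,B_n\}$ and $a_j,b_j\in G$; for $\sigma:\{B_1,\dots,B_n\}\to\{0,1\}$, $\sigma(P)=c_1\cdots c_\ell\in G$ where $c_j=a_j$ if $\sigma(B_{i_j})=0$ and $c_j=b_j$ if $\sigma(B_{i_j})=1$. A $G$-program $P$ computes $f:\{0,1\}^n\to\{0,1\}$ if there is $S\subseteq G$ with $\sigma(P)\in S$ iff $f(\sigma)=1$. *)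

theory Defs
  imports Complex_Main "HOL-Algebra.Algebra" "HOL-Library.Extended_Nat"
begin

definition gcomm :: "('a, 'b) monoid_scheme \<Rightarrow> 'a \<Rightarrow> 'a \<Rightarrow> 'a" where
  "gcomm G x y = inv\<^bsub>G\<^esub> x \<otimes>\<^bsub>G\<^esub> inv\<^bsub>G\<^esub> y \<otimes>\<^bsub>G\<^esub> x \<otimes>\<^bsub>G\<^esub> y"

definition comm_subgroup :: "('a, 'b) monoid_scheme \<Rightarrow> 'a set \<Rightarrow> 'a set \<Rightarrow> 'a set" where
  "comm_subgroup G A B = generate G {gcomm G a b | a b. a \<in> A \<and> b \<in> B}"

text \<open>gamma_k H = [H,H,...,H] with k+1 copies of H (so gamma_0 H = H, gamma_1 H = [H,H]).\<close>
fun lcs :: "('a, 'b) monoid_scheme \<Rightarrow> 'a set \<Rightarrow> nat \<Rightarrow> 'a set" where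
  "lcs G H 0 = H"
| "lcs G H (Suc k) = comm_subgroup G (lcs G H k) H"

definition nil_residual :: "('a, 'b) monoid_scheme \<Rightarrow> 'a set \<Rightarrow> 'a set" where
  "nil_residual G H = (THE K. \<exists>N. \<forall>i\<ge>N. lcs G H i = K)"

definition lcs_e :: "('a, 'b) monoid_scheme \<Rightarrow> 'a set \<Rightarrow> enat \<Rightarrow> 'a set" where
  "lcs_e G H k = (case k of enat j \<Rightarrow> lcs G H j | \<infinity> \<Rightarrow> nil_residual G H)"

text \<open>G-programs over variables B_0,...,B_{n-1} (0-based): a list of instructions (i, a, b).\<close>
definition is_program :: "('a, 'b) monoid_scheme \<Rightarrow> nat \<Rightarrow> (nat \<times> 'a \<times> 'a) list \<Rightarrow> bool" where
  "is_program G n P \<longleftrightarrow> (\<forall>(i, a, b) \<in> set P. i < n \<and> a \<in> carrier G \<and> b \<in> carrier G)"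

definition eval_program :: "('a, 'b) monoid_scheme \<Rightarrow> (nat \<Rightarrow> bool) \<Rightarrow> (nat \<times> 'a \<times> 'a) list \<Rightarrow> 'a" where
  "eval_program G \<sigma> P = foldr (\<lambda>(i, a, b) acc. (if \<sigma> i then b else a) \<otimes>\<^bsub>G\<^esub> acc) P \<one>\<^bsub>G\<^esub>"

end

theory Submission
  imports Defs
begin

text \<open>
  Call a normal subgroup \<open>A\<close> AND-generated on inputs \<open>S\<close> with length \<open>L\<close> if it is generated
  by elements \<open>g\<close> having a program of length at most \<open>L\<close> over \<open>S\<close> that outputs \<open>g\<close> when all
  inputs are 1 and \<open>\<one>\<close> otherwise. These elements are closed under conjugation, and from programs
  \<open>P\<close>, \<open>R\<close> for \<open>g\<close>, \<open>h\<close> the program \<open>P\<^sup>-\<^sup>1 R\<^sup>-\<^sup>1 P R\<close> computes \<open>[g, h]\<close> on the union of the inputs;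
  hence \<open>[A, B]\<close> is AND-generated with length \<open>2 (L\<^sub>A + L\<^sub>B)\<close>.

  A step \<open>H\<^sub>i = \<gamma>\<^sub>k H\<^sub>i\<^sub>+\<^sub>1\<close> multiplies the number of inputs by \<open>k + 1\<close>
  at a constant factor \<open>4\<^sup>k\<close> in length. A step \<open>H\<^sub>i = [H\<^sub>i, H\<^sub>i\<^sub>+\<^sub>1]\<close> can be iterated: \<open>r\<close> rounds,
  each with \<open>t\<close> fresh inputs for \<open>H\<^sub>i\<^sub>+\<^sub>1\<close>, give \<open>1 + r t\<close> inputs at about \<open>2\<^sup>r\<close> times the length
  for \<open>H\<^sub>i\<^sub>+\<^sub>1\<close>. Taking \<open>r \<approx> s\<close> and \<open>t \<approx> C s\<^sup>c\<close> with \<open>s = (n / C)^(1/(c+1))\<close>, induction yields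
  length \<open>O(2^(c (n / C)^(1/c)))\<close>, i.e. \<open>O(2^(D n^(1/c)))\<close>, for \<open>H\<^sub>1\<close>; since \<open>H\<^sub>1 \<noteq> 1\<close>, one of
  its generators is nontrivial.
\<close>

section \<open>Commutator subgroups\<close>

definition conj_closed :: "('a, 'b) monoid_scheme \<Rightarrow> 'a set \<Rightarrow> bool" where
  "conj_closed G S \<longleftrightarrow> (\<forall>s\<in>S. \<forall>g\<in>carrier G. g \<otimes>\<^bsub>G\<^esub> s \<otimes>\<^bsub>G\<^esub> inv\<^bsub>G\<^esub> g \<in> S)"

context group
begin

lemma m_inv_cancel_left [simp]: "x \<in> carrier G \<Longrightarrow> y \<in> carrier G \<Longrightarrow> x \<otimes> (inv x \<otimes> y) = y"
  by (simp add: m_assoc[symmetric])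

lemma inv_m_cancel_left [simp]: "x \<in> carrier G \<Longrightarrow> y \<in> carrier G \<Longrightarrow> inv x \<otimes> (x \<otimes> y) = y"
  by (simp add: m_assoc[symmetric])

lemma gcomm_closed [simp]: "x \<in> carrier G \<Longrightarrow> y \<in> carrier G \<Longrightarrow> gcomm G x y \<in> carrier G"
  by (simp add: gcomm_def)

lemma gcomm_one_right [simp]: "x \<in> carrier G \<Longrightarrow> gcomm G x \<one> = \<one>"
  by (simp add: gcomm_def)

lemma gcomm_swap: "x \<in> carrier G \<Longrightarrow> y \<in> carrier G \<Longrightarrow> gcomm G y x = inv (gcomm G x y)"
  by (simp add: gcomm_def inv_mult_group m_assoc)

lemma gcomm_mult_right:
  "\<lbrakk>x \<in> carrier G; y \<in> carrier G; z \<in> carrier G\<rbrakk> \<Longrightarrow>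
     gcomm G x (y \<otimes> z) = gcomm G x z \<otimes> (inv z \<otimes> gcomm G x y \<otimes> z)"
  by (simp add: gcomm_def inv_mult_group m_assoc)

lemma gcomm_inv_right:
  "x \<in> carrier G \<Longrightarrow> y \<in> carrier G \<Longrightarrow> gcomm G x (inv y) = y \<otimes> inv (gcomm G x y) \<otimes> inv y"
  by (simp add: gcomm_def inv_mult_group m_assoc)

lemma gcomm_conj:
  "\<lbrakk>x \<in> carrier G; y \<in> carrier G; g \<in> carrier G\<rbrakk> \<Longrightarrow>
     g \<otimes> gcomm G x y \<otimes> inv g = gcomm G (g \<otimes> x \<otimes> inv g) (g \<otimes> y \<otimes> inv g)"
  by (simp add: gcomm_def inv_mult_group m_assoc)

lemma normal_conj_closed: "A \<lhd> G \<Longrightarrow> conj_closed G A"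
  unfolding conj_closed_def by (blast intro: normal.inv_op_closed2)

lemma normal_subset: "A \<lhd> G \<Longrightarrow> A \<subseteq> carrier G"
  by (rule subgroup.subset[OF normal_imp_subgroup])

lemma normal_generate_gcomm:
  assumes "A \<subseteq> carrier G" "B \<subseteq> carrier G" "conj_closed G A" "conj_closed G B"
  shows "generate G {gcomm G x y | x y. x \<in> A \<and> y \<in> B} \<lhd> G"
proof (rule normal_generateI)
  show "{gcomm G x y | x y. x \<in> A \<and> y \<in> B} \<subseteq> carrier G"
    using assms(1,2) by (blast intro: gcomm_closed)
next
  fix h g assume "h \<in> {gcomm G x y | x y. x \<in> A \<and> y \<in> B}" and g: "g \<in> carrier G"
  then obtain x y where "h = gcomm G x y" "x \<in> A" "y \<in> B" by blast
  with assms g show "g \<otimes> h \<otimes> inv g \<in> {gcomm G x y | x y. x \<in> A \<and> y \<in> B}"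
    unfolding conj_closed_def by (blast intro: gcomm_conj)
qed

lemma subgroup_gcomm_in_normal:
  assumes W: "W \<lhd> G" and x: "x \<in> carrier G"
  shows "subgroup {y \<in> carrier G. gcomm G x y \<in> W} G"
proof (rule subgroupI)
  interpret W: normal W G by (fact W)
  show "{y \<in> carrier G. gcomm G x y \<in> W} \<noteq> {}"
    using x by (auto intro!: exI[of _ \<one>])
  fix y z assume y: "y \<in> {y \<in> carrier G. gcomm G x y \<in> W}" and z: "z \<in> {y \<in> carrier G. gcomm G x y \<in> W}"
  show "inv y \<in> {y \<in> carrier G. gcomm G x y \<in> W}"
    using y x by (simp add: gcomm_inv_right W.inv_op_closed2)
  show "y \<otimes> z \<in> {y \<in> carrier G. gcomm G x y \<in> W}"
    using y z x by (simp add: gcomm_mult_right W.inv_op_closed1)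
qed auto

text \<open>Commuting modulo \<open>W\<close> with a fixed element is a subgroup condition, so it passes from
  generators to generated subgroups, one argument at a time.\<close>

lemma comm_subgroup_generate_subset:
  assumes AB: "A \<subseteq> carrier G" "B \<subseteq> carrier G" "conj_closed G A" "conj_closed G B"
  shows "comm_subgroup G (generate G A) (generate G B) \<subseteq> generate G {gcomm G a b | a b. a \<in> A \<and> b \<in> B}"
    (is "_ \<subseteq> ?W")
proof -
  have W: "?W \<lhd> G" by (rule normal_generate_gcomm[OF AB])
  have gen: "generate G S \<subseteq> {y \<in> carrier G. gcomm G x y \<in> ?W}"
    if "x \<in> carrier G" "S \<subseteq> {y \<in> carrier G. gcomm G x y \<in> ?W}" for x S
    by (rule generate_subgroup_incl[OF that(2) subgroup_gcomm_in_normal[OF W that(1)]])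
  have swap: "gcomm G y x \<in> ?W" if "x \<in> carrier G" "y \<in> carrier G" "gcomm G x y \<in> ?W" for x y
    using gcomm_swap[OF that(1,2)] subgroup.m_inv_closed[OF normal_imp_subgroup[OF W] that(3)]
    by (rule ssubst)
  have "gcomm G x y \<in> ?W" if x: "x \<in> generate G A" and y: "y \<in> generate G B" for x y
  proof -
    have xc: "x \<in> carrier G" and yc: "y \<in> carrier G"
      using x y AB generate_in_carrier by auto
    have "gcomm G y a \<in> ?W" if a: "a \<in> A" for a
    proof -
      have ac: "a \<in> carrier G" using a AB by auto
      have "B \<subseteq> {y \<in> carrier G. gcomm G a y \<in> ?W}"
        using a AB(2) by (auto intro: generate.incl)
      then have "gcomm G a y \<in> ?W" using gen[OF ac] y by auto
      then show ?thesis using swap ac yc by blast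
    qed
    then have "A \<subseteq> {a \<in> carrier G. gcomm G y a \<in> ?W}"
      using AB(1) by auto
    then have "gcomm G y x \<in> ?W" using gen[OF yc] x by auto
    then show ?thesis using swap xc yc by blast
  qed
  then show ?thesis
    unfolding comm_subgroup_def
    by (intro generate_subgroup_incl[OF _ normal_imp_subgroup[OF W]]) blast
qed

lemma normal_comm_subgroup:
  assumes "A \<lhd> G" "B \<lhd> G"
  shows "comm_subgroup G A B \<lhd> G"
  unfolding comm_subgroup_def
  by (rule normal_generate_gcomm) (use assms normal_subset normal_conj_closed in auto)

lemma comm_subgroup_subset_left:
  assumes A: "A \<lhd> G" and B: "B \<subseteq> carrier G"
  shows "comm_subgroup G A B \<subseteq> A"
  unfolding comm_subgroup_def
proof (rule generate_subgroup_incl[OF _ normal_imp_subgroup[OF A]], safe)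
  interpret A: normal A G by (fact A)
  fix a b assume "a \<in> A" "b \<in> B"
  then have "inv a \<otimes> (inv b \<otimes> a \<otimes> b) \<in> A"
    using B by (auto intro: A.inv_op_closed1)
  with \<open>a \<in> A\<close> \<open>b \<in> B\<close> B show "gcomm G a b \<in> A"
    by (auto simp: gcomm_def m_assoc)
qed

lemma normal_lcs: "B \<lhd> G \<Longrightarrow> lcs G B j \<lhd> G"
  by (induction j) (auto intro: normal_comm_subgroup)

lemma lcs_Suc_subset: "B \<lhd> G \<Longrightarrow> lcs G B (Suc j) \<subseteq> lcs G B j"
  using comm_subgroup_subset_left[OF normal_lcs] normal_subset by simp

lemma lcs_eventually_const:
  assumes fin: "finite (carrier G)" and B: "B \<lhd> G"
  obtains N where "\<And>j. j \<ge> N \<Longrightarrow> lcs G B j = lcs G B N"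
proof -
  obtain N where N: "\<And>j. card (lcs G B N) \<le> card (lcs G B j)"
    using ex_has_least_nat[of "\<lambda>_. True" 0 "\<lambda>j. card (lcs G B j)"] by blast
  have "lcs G B j = lcs G B N" if "j \<ge> N" for j
  proof (rule card_subset_eq)
    show "finite (lcs G B N)"
      using finite_subset[OF normal_subset[OF normal_lcs[OF B]] fin] .
    show sub: "lcs G B j \<subseteq> lcs G B N"
      using lift_Suc_antimono_le[of "lcs G B", OF lcs_Suc_subset[OF B] that] .
    show "card (lcs G B j) = card (lcs G B N)"
      using N[of j] card_mono[OF \<open>finite (lcs G B N)\<close> sub] by linarith
  qed
  then show ?thesis by (rule that)
qed

lemma nil_residual_perfect:
  assumes fin: "finite (carrier G)" and B: "B \<lhd> G"
  shows "comm_subgroup G (nil_residual G B) B = nil_residual G B"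
proof -
  obtain N where N: "\<And>j. j \<ge> N \<Longrightarrow> lcs G B j = lcs G B N"
    using lcs_eventually_const[OF assms] by blast
  have "nil_residual G B = lcs G B N"
    unfolding nil_residual_def
  proof (rule the_equality)
    show "\<exists>N'. \<forall>i\<ge>N'. lcs G B i = lcs G B N" using N by blast
    fix K assume "\<exists>N'. \<forall>i\<ge>N'. lcs G B i = K"
    then obtain N' where "\<forall>i\<ge>N'. lcs G B i = K" by blast
    then show "K = lcs G B N" using N[of "max N N'"] by simp
  qed
  moreover have "lcs G B (Suc N) = lcs G B N" using N[of "Suc N"] by simp
  ultimately show ?thesis by simp
qed

end

section \<open>Group programs\<close>

definition program_over :: "('a, 'b) monoid_scheme \<Rightarrow> nat set \<Rightarrow> (nat \<times> 'a \<times> 'a) list \<Rightarrow> bool" where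
  "program_over G S P \<longleftrightarrow> (\<forall>(i, a, b) \<in> set P. i \<in> S \<and> a \<in> carrier G \<and> b \<in> carrier G)"

definition computes_and :: "('a, 'b) monoid_scheme \<Rightarrow> nat set \<Rightarrow> real \<Rightarrow> 'a \<Rightarrow> bool" where
  "computes_and G S L g \<longleftrightarrow> (\<exists>P. program_over G S P \<and> real (length P) \<le> L \<and>
      (\<forall>\<sigma>. eval_program G \<sigma> P = (if \<forall>j\<in>S. \<sigma> j then g else \<one>\<^bsub>G\<^esub>)))"

definition program_inv :: "('a, 'b) monoid_scheme \<Rightarrow> (nat \<times> 'a \<times> 'a) list \<Rightarrow> (nat \<times> 'a \<times> 'a) list" where
  "program_inv G P = rev (map (\<lambda>(i, a, b). (i, inv\<^bsub>G\<^esub> a, inv\<^bsub>G\<^esub> b)) P)"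

definition program_conj :: "('a, 'b) monoid_scheme \<Rightarrow> 'a \<Rightarrow> (nat \<times> 'a \<times> 'a) list \<Rightarrow> (nat \<times> 'a \<times> 'a) list" where
  "program_conj G x P =
     map (\<lambda>(i, a, b). (i, x \<otimes>\<^bsub>G\<^esub> a \<otimes>\<^bsub>G\<^esub> inv\<^bsub>G\<^esub> x, x \<otimes>\<^bsub>G\<^esub> b \<otimes>\<^bsub>G\<^esub> inv\<^bsub>G\<^esub> x)) P"

definition program_rename :: "(nat \<Rightarrow> nat) \<Rightarrow> (nat \<times> 'a \<times> 'a) list \<Rightarrow> (nat \<times> 'a \<times> 'a) list" where
  "program_rename f P = map (\<lambda>(i, a, b). (f i, a, b)) P"

lemma is_program_iff_program_over: "is_program G n P \<longleftrightarrow> program_over G {..<n} P"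
  by (simp add: is_program_def program_over_def)

lemma eval_program_Nil [simp]: "eval_program G \<sigma> [] = \<one>\<^bsub>G\<^esub>"
  by (simp add: eval_program_def)

lemma eval_program_Cons [simp]:
  "eval_program G \<sigma> ((i, a, b) # P) = (if \<sigma> i then b else a) \<otimes>\<^bsub>G\<^esub> eval_program G \<sigma> P"
  by (simp add: eval_program_def)

lemma program_over_Nil [simp]: "program_over G S []"
  by (simp add: program_over_def)

lemma program_over_Cons [simp]:
  "program_over G S ((i, a, b) # P) \<longleftrightarrow> i \<in> S \<and> a \<in> carrier G \<and> b \<in> carrier G \<and> program_over G S P"
  by (simp add: program_over_def)

lemma program_over_append [simp]: "program_over G S (P @ Q) \<longleftrightarrow> program_over G S P \<and> program_over G S Q"
  unfolding program_over_def by (simp add: ball_Un)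

lemma program_over_mono: "program_over G S P \<Longrightarrow> S \<subseteq> T \<Longrightarrow> program_over G T P"
  by (auto simp: program_over_def)

lemma program_over_rename: "program_over G S P \<Longrightarrow> program_over G (f ` S) (program_rename f P)"
  by (auto simp: program_over_def program_rename_def)

lemma length_program_inv [simp]: "length (program_inv G P) = length P"
  by (simp add: program_inv_def)

lemma length_program_conj [simp]: "length (program_conj G x P) = length P"
  by (simp add: program_conj_def)

lemma length_program_rename [simp]: "length (program_rename f P) = length P"
  by (simp add: program_rename_def)

lemma eval_program_rename: "eval_program G \<sigma> (program_rename f P) = eval_program G (\<sigma> \<circ> f) P"
  by (induction P) (auto simp: program_rename_def)

context group
begin

lemma eval_program_closed: "program_over G S P \<Longrightarrow> eval_program G \<sigma> P \<in> carrier G"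
  by (induction P) auto

lemma eval_program_append:
  "program_over G S P \<Longrightarrow> program_over G S Q \<Longrightarrow>
     eval_program G \<sigma> (P @ Q) = eval_program G \<sigma> P \<otimes> eval_program G \<sigma> Q"
  by (induction P) (auto simp: m_assoc eval_program_closed)

lemma program_over_inv: "program_over G S P \<Longrightarrow> program_over G S (program_inv G P)"
  by (auto simp: program_over_def program_inv_def)

lemma program_over_conj: "program_over G S P \<Longrightarrow> x \<in> carrier G \<Longrightarrow> program_over G S (program_conj G x P)"
  by (auto simp: program_over_def program_conj_def)

lemma eval_program_inv:
  "program_over G S P \<Longrightarrow> eval_program G \<sigma> (program_inv G P) = inv (eval_program G \<sigma> P)"
proof (induction P)
  case (Cons instr P)
  obtain i a b where instr: "instr = (i, a, b)" by (cases instr)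
  have "program_inv G (instr # P) = program_inv G P @ [(i, inv a, inv b)]"
    by (simp add: program_inv_def instr)
  with Cons instr program_over_inv show ?case
    by (simp add: eval_program_append[of S] eval_program_closed[of S] inv_mult_group)
qed (simp add: program_inv_def)

text \<open>The product telescopes: the inner factors \<open>inv x \<otimes> x\<close> cancel.\<close>

lemma eval_program_conj:
  "program_over G S P \<Longrightarrow> x \<in> carrier G \<Longrightarrow>
     eval_program G \<sigma> (program_conj G x P) = x \<otimes> eval_program G \<sigma> P \<otimes> inv x"
  by (induction P) (auto simp: program_conj_def m_assoc eval_program_closed)

lemma computes_and_closed: "computes_and G S L g \<Longrightarrow> g \<in> carrier G"
  unfolding computes_and_def by (metis (full_types) eval_program_closed[where \<sigma> = "\<lambda>_. True"])

lemma computes_and_mono: "computes_and G S L g \<Longrightarrow> L \<le> L' \<Longrightarrow> computes_and G S L' g"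
  unfolding computes_and_def by force

lemma computes_and_singleton: "g \<in> carrier G \<Longrightarrow> computes_and G {i} 1 g"
  unfolding computes_and_def by (intro exI[of _ "[(i, \<one>, g)]"]) auto

lemma computes_and_rename:
  assumes "computes_and G S L g"
  shows "computes_and G (f ` S) L g"
proof -
  obtain P where P: "program_over G S P" "real (length P) \<le> L"
    "\<And>\<sigma>. eval_program G \<sigma> P = (if \<forall>j\<in>S. \<sigma> j then g else \<one>)"
    using assms unfolding computes_and_def by blast
  show ?thesis
    unfolding computes_and_def
    by (intro exI[of _ "program_rename f P"]) (use P program_over_rename in \<open>auto simp: eval_program_rename\<close>)
qed

lemma computes_and_conj:
  assumes "computes_and G S L g" "x \<in> carrier G"
  shows "computes_and G S L (x \<otimes> g \<otimes> inv x)"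
proof -
  obtain P where P: "program_over G S P" "real (length P) \<le> L"
    "\<And>\<sigma>. eval_program G \<sigma> P = (if \<forall>j\<in>S. \<sigma> j then g else \<one>)"
    using assms(1) unfolding computes_and_def by blast
  show ?thesis
    unfolding computes_and_def
    by (intro exI[of _ "program_conj G x P"])
       (use P assms(2) program_over_conj in \<open>auto simp: eval_program_conj\<close>)
qed

text \<open>\<open>P\<^sup>-\<^sup>1 R\<^sup>-\<^sup>1 P R\<close> evaluates to the commutator of the values of \<open>P\<close> and \<open>R\<close>, which is \<open>\<one>\<close>
  as soon as one of them is.\<close>

lemma computes_and_gcomm:
  assumes "computes_and G S L g" "computes_and G T M h"
  shows "computes_and G (S \<union> T) (2 * (L + M)) (gcomm G g h)"
proof -
  obtain P where P: "program_over G S P" "real (length P) \<le> L"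
    "\<And>\<sigma>. eval_program G \<sigma> P = (if \<forall>j\<in>S. \<sigma> j then g else \<one>)"
    using assms(1) unfolding computes_and_def by blast
  obtain R where R: "program_over G T R" "real (length R) \<le> M"
    "\<And>\<sigma>. eval_program G \<sigma> R = (if \<forall>j\<in>T. \<sigma> j then h else \<one>)"
    using assms(2) unfolding computes_and_def by blast
  have gh: "g \<in> carrier G" "h \<in> carrier G" using assms computes_and_closed by auto
  have P': "program_over G (S \<union> T) P" and R': "program_over G (S \<union> T) R"
    using P(1) R(1) program_over_mono by blast+
  define Q where "Q = program_inv G P @ program_inv G R @ P @ R"
  have "program_over G (S \<union> T) Q"
    unfolding Q_def using P' R' program_over_inv by simp
  moreover have "eval_program G \<sigma> Q = (if \<forall>j\<in>S \<union> T. \<sigma> j then gcomm G g h else \<one>)" for \<sigma>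
    using P' R' gh unfolding Q_def
    by (simp add: eval_program_append[of "S \<union> T"] program_over_inv eval_program_inv P(3) R(3))
       (auto simp: gcomm_def m_assoc)
  moreover have "real (length Q) \<le> 2 * (L + M)"
    unfolding Q_def using P(2) R(2) by simp
  ultimately show ?thesis
    unfolding computes_and_def by blast
qed

end

section \<open>AND-generated subgroups\<close>

definition and_generated :: "('a, 'b) monoid_scheme \<Rightarrow> 'a set \<Rightarrow> nat set \<Rightarrow> real \<Rightarrow> bool" where
  "and_generated G A S L \<longleftrightarrow> A \<subseteq> generate G {g \<in> A. computes_and G S L g}"

context group
begin

lemma and_generated_mono: "and_generated G A S L \<Longrightarrow> L \<le> L' \<Longrightarrow> and_generated G A S L'"
  unfolding and_generated_def
  using mono_generate[of "{g \<in> A. computes_and G S L g}" "{g \<in> A. computes_and G S L' g}"]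
  by (blast intro: computes_and_mono)

lemma and_generated_rename: "and_generated G A S L \<Longrightarrow> and_generated G A (f ` S) L"
  unfolding and_generated_def
  using mono_generate[of "{g \<in> A. computes_and G S L g}" "{g \<in> A. computes_and G (f ` S) L g}"]
  by (blast intro: computes_and_rename)

lemma and_generated_singleton: "A \<subseteq> carrier G \<Longrightarrow> and_generated G A {i} 1"
  unfolding and_generated_def by (auto intro: generate.incl computes_and_singleton)

lemma and_generated_shift: "and_generated G A {..<t} L \<Longrightarrow> and_generated G A {c..<c + t} L"
  using and_generated_rename[of A "{..<t}" L "\<lambda>j. c + j"] by (simp add: lessThan_atLeast0 add.commute)

text \<open>Identifying the inputs \<open>s - 1, \<dots>, t - 1\<close> turns an AND of \<open>t\<close> inputs into one of \<open>s\<close> inputs.\<close>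

lemma and_generated_shrink:
  assumes "and_generated G A {..<t} L" "1 \<le> s" "s \<le> t"
  shows "and_generated G A {..<s} L"
proof -
  have "(\<lambda>j. min j (s - 1)) ` {..<t} = {..<s}"
  proof
    show "{..<s} \<subseteq> (\<lambda>j. min j (s - 1)) ` {..<t}"
    proof
      fix j assume "j \<in> {..<s}"
      then have "j = min j (s - 1)" "j \<in> {..<t}" using assms(3) by auto
      then show "j \<in> (\<lambda>j. min j (s - 1)) ` {..<t}" by blast
    qed
  qed (use assms(2) in auto)
  then show ?thesis
    using and_generated_rename[OF assms(1), of "\<lambda>j. min j (s - 1)"] by simp
qed

lemma and_generated_comm_subgroup:
  assumes A: "A \<lhd> G" and B: "B \<lhd> G"
    and "and_generated G A S L" and "and_generated G B T M"
  shows "and_generated G (comm_subgroup G A B) (S \<union> T) (2 * (L + M))"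
proof -
  let ?A = "{g \<in> A. computes_and G S L g}" and ?B = "{g \<in> B. computes_and G T M g}"
  have gen_eq: "generate G {g \<in> C. computes_and G U K g} = C"
    if C: "C \<lhd> G" and "and_generated G C U K" for C U K
  proof
    show "generate G {g \<in> C. computes_and G U K g} \<subseteq> C"
      by (rule generate_subgroup_incl[OF _ normal_imp_subgroup[OF C]]) blast
  qed (use that in \<open>simp add: and_generated_def\<close>)
  have cc: "conj_closed G {g \<in> C. computes_and G U K g}" if C: "C \<lhd> G" for C U K
    using normal_conj_closed[OF C] unfolding conj_closed_def by (auto intro: computes_and_conj)
  have "comm_subgroup G A B = comm_subgroup G (generate G ?A) (generate G ?B)"
    using gen_eq A B assms(3,4) by simp
  also have "\<dots> \<subseteq> generate G {gcomm G a b | a b. a \<in> ?A \<and> b \<in> ?B}"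
    by (rule comm_subgroup_generate_subset) (use A B normal_subset cc in auto)
  also have "\<dots> \<subseteq> generate G {g \<in> comm_subgroup G A B. computes_and G (S \<union> T) (2 * (L + M)) g}"
    unfolding comm_subgroup_def
    by (rule mono_generate) (use computes_and_gcomm in \<open>auto intro: generate.incl\<close>)
  finally show ?thesis
    unfolding and_generated_def .
qed

lemma and_generated_lcs:
  assumes B: "B \<lhd> G" and gen: "and_generated G B {..<t} L" and "L \<ge> 0"
  shows "and_generated G (lcs G B k) {..<(k + 1) * t} (4 ^ k * L)"
proof (induction k)
  case 0
  then show ?case using gen by simp
next
  case (Suc k)
  have "and_generated G (lcs G B (Suc k)) ({..<(k + 1) * t} \<union> {(k + 1) * t..<(k + 1) * t + t})
          (2 * (4 ^ k * L + L))"
    using and_generated_comm_subgroup[OF normal_lcs[OF B] B Suc and_generated_shift[OF gen]] by simp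
  moreover have "{..<(k + 1) * t} \<union> {(k + 1) * t..<(k + 1) * t + t} = {..<(Suc k + 1) * t}"
    by auto
  moreover have "2 * (4 ^ k * L + L) \<le> 4 ^ Suc k * L"
    using \<open>L \<ge> 0\<close> by (simp add: mult_le_cancel_left1)
  ultimately show ?case
    using and_generated_mono by auto
qed

lemma and_generated_perfect:
  assumes A: "A \<lhd> G" and B: "B \<lhd> G" and perfect: "comm_subgroup G A B = A"
    and gen: "and_generated G B {..<t} L"
  shows "and_generated G A {..<1 + r * t} (2 ^ r * (1 + 2 * L) - 2 * L)"
proof (induction r)
  case 0
  then show ?case
    using and_generated_singleton[OF normal_subset[OF A], of 0] by (simp add: lessThan_Suc)
next
  case (Suc r)
  have "and_generated G A ({..<1 + r * t} \<union> {1 + r * t..<1 + r * t + t})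
          (2 * ((2 ^ r * (1 + 2 * L) - 2 * L) + L))"
    using and_generated_comm_subgroup[OF A B Suc and_generated_shift[OF gen, of "1 + r * t"]]
    unfolding perfect .
  moreover have "{..<1 + r * t} \<union> {1 + r * t..<1 + r * t + t} = {..<1 + Suc r * t}"
    by auto
  moreover have "2 * ((2 ^ r * (1 + 2 * L) - 2 * L) + L) = 2 ^ Suc r * (1 + 2 * L) - 2 * L"
    by (simp add: algebra_simps)
  ultimately show ?case
    by (simp only: add.assoc)
qed

lemma and_generated_nontrivial:
  assumes "and_generated G A S L" "subgroup A G" "A \<noteq> {\<one>}"
  obtains g where "g \<in> A" "g \<noteq> \<one>" "computes_and G S L g"
proof -
  have "\<not> {g \<in> A. computes_and G S L g} \<subseteq> {\<one>}"
  proof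
    assume "{g \<in> A. computes_and G S L g} \<subseteq> {\<one>}"
    then have "A \<subseteq> {\<one>}"
      using assms(1) generate_subgroup_incl[OF _ triv_subgroup] unfolding and_generated_def by blast
    then show False
      using assms(2,3) subgroup.one_closed by blast
  qed
  then show ?thesis using that by blast
qed

end

section \<open>Length bounds along the series\<close>

lemma powr_add_one_le:
  fixes x p :: real
  assumes "0 \<le> x" "0 < p" "p \<le> 1"
  shows "(x + 1) powr p \<le> x powr p + 1"
proof -
  define y where "y = x + 1"
  have y: "y \<ge> 1" using assms(1) by (simp add: y_def)
  have "x / y \<le> (x / y) powr p" "1 / y \<le> (1 / y) powr p"
    using powr_mono'[of p 1 "x / y"] powr_mono'[of p 1 "1 / y"] assms y by (auto simp: y_def)
  moreover have "x / y + 1 / y = 1"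
    using y by (simp add: y_def field_simps)
  ultimately have "1 \<le> (x / y) powr p + (1 / y) powr p"
    by linarith
  also have "\<dots> = (x powr p + 1) / y powr p"
    by (simp add: powr_divide add_divide_distrib)
  finally show ?thesis
    using y by (simp add: y_def field_simps)
qed

text \<open>For \<open>c = 0\<close> both sides vanish, whatever \<open>powr\<close> does with the exponent \<open>1 / 0 = 0\<close>.\<close>

lemma mult_root_le_root_plus:
  fixes x y :: real and c :: nat
  assumes "0 \<le> x" "0 \<le> y" "x \<le> y + 1"
  shows "real c * x powr (1 / real c) \<le> real c * y powr (1 / real c) + real c"
proof (cases "c = 0")
  case False
  then have p: "0 < 1 / real c" "1 / real c \<le> 1" by auto
  have "x powr (1 / real c) \<le> (y + 1) powr (1 / real c)"
    using assms p by (intro powr_mono2) auto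
  also have "\<dots> \<le> y powr (1 / real c) + 1"
    using powr_add_one_le[OF assms(2) p] .
  finally have "real c * x powr (1 / real c) \<le> real c * (y powr (1 / real c) + 1)"
    by (simp add: mult_left_mono)
  then show ?thesis
    by (simp add: distrib_left)
qed simp

lemma perfect_step_exponent_le:
  fixes c t r :: nat and C n s :: real
  assumes C: "C \<ge> 1" and s: "s > 0" "s ^ Suc c = n / C"
    and t: "C * s ^ c \<le> t" "t \<le> C * s ^ c + 1" and r: "r \<le> n / t + 1"
  shows "r + c * (t / C) powr (1 / c) \<le> Suc c * s + Suc c"
proof -
  have Cs: "C * s ^ c > 0" using C s by simp
  have n: "n = C * s ^ c * s" using s C by (simp add: field_simps)
  have "n / t \<le> n / (C * s ^ c)"
    using t Cs s by (intro divide_left_mono) (auto simp: n)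
  also have "\<dots> = s" using C s unfolding n by (simp add: field_simps)
  finally have r_le: "r \<le> s + 1" using r by linarith
  have "c * (t / C) powr (1 / c) \<le> c * (s ^ c) powr (1 / c) + c"
  proof (rule mult_root_le_root_plus)
    have "t / C \<le> s ^ c + 1 / C" using t C by (simp add: field_simps)
    also have "\<dots> \<le> s ^ c + 1" using C by simp
    finally show "t / C \<le> s ^ c + 1" .
  qed (use C s in auto)
  also have "c * (s ^ c) powr (1 / c) = c * s"
    using s by (cases "c = 0") (simp_all add: powr_realpow[symmetric] powr_powr)
  finally show ?thesis using r_le by (simp add: algebra_simps)
qed

lemma lcs_step_parameters:
  fixes n k c C :: nat
  assumes n: "n \<ge> 1" and C: "C \<ge> 1" and small: "c = 0 \<longrightarrow> n \<le> C * (k + 1)"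
  obtains t where "t \<ge> 1" "c = 0 \<longrightarrow> t \<le> C" "n \<le> (k + 1) * t"
    "c * (t / C) powr (1 / c) \<le> c * (n / (C * (k + 1))) powr (1 / c) + c"
proof -
  define t where "t = (n + k) div (k + 1)"
  have t_ge: "n \<le> (k + 1) * t"
  proof -
    have "(n + k) mod (k + 1) \<le> k" by (simp add: less_Suc_eq_le)
    then have "n \<le> (n + k) div (k + 1) * (k + 1)"
      using div_mult_mod_eq[of "n + k" "k + 1"] by linarith
    then show ?thesis unfolding t_def by (simp only: mult.commute)
  qed
  have t_le: "t * (k + 1) \<le> n + k"
    unfolding t_def by (rule div_times_less_eq_dividend)
  have "t \<ge> 1" using t_ge n by (cases "t = 0") auto
  moreover have "c = 0 \<longrightarrow> t \<le> C"
  proof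
    assume "c = 0"
    then have "t * (k + 1) < (C + 1) * (k + 1)"
      using small t_le by (simp add: algebra_simps)
    then show "t \<le> C" by (simp only: mult_less_cancel2) simp
  qed
  moreover have "real t / C \<le> real n / (C * (k + 1)) + 1"
  proof -
    have "real t * (k + 1) \<le> n + k" using t_le by (metis of_nat_add of_nat_le_iff of_nat_mult)
    then have "real t \<le> n / (k + 1) + 1" by (simp add: field_simps)
    then have "real t / C \<le> (n / (k + 1) + 1) / C"
      by (simp add: divide_right_mono)
    also have "\<dots> = n / (C * (k + 1)) + 1 / C"
      by (simp add: add_divide_distrib algebra_simps)
    also have "\<dots> \<le> n / (C * (k + 1)) + 1"
      using C by simp
    finally show ?thesis .
  qed
  then have "c * (t / C) powr (1 / c) \<le> c * (n / (C * (k + 1))) powr (1 / c) + c"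
    by (intro mult_root_le_root_plus) auto
  ultimately show ?thesis using t_ge that by blast
qed

lemma perfect_step_parameters:
  fixes n c C :: nat
  assumes n: "n \<ge> 1" and C: "C \<ge> 1"
  obtains t r where "t \<ge> 1" "c = 0 \<longrightarrow> t \<le> C" "n \<le> 1 + r * t"
    "r + c * (t / C) powr (1 / c) \<le> Suc c * (n / C) powr (1 / Suc c) + Suc c"
proof -
  define s where "s = (n / C) powr (1 / Suc c)"
  have s_pos: "s > 0" using n C by (simp add: s_def)
  have "s ^ Suc c = s powr real (Suc c)" by (rule powr_realpow[symmetric, OF s_pos])
  also have "\<dots> = n / C" unfolding s_def using n C by (simp add: powr_powr)
  finally have s: "s > 0" "s ^ Suc c = n / C" using s_pos by auto
  txt \<open>The \<open>t\<close> inputs per round and the \<open>n / t\<close> rounds are balanced at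
    \<open>t \<approx> C s\<^sup>c\<close>, \<open>n / t \<approx> s\<close>.\<close>
  define t where "t = nat \<lceil>C * s ^ c\<rceil>"
  have Cs: "C * s ^ c > 0" using s C by simp
  have t: "C * s ^ c \<le> t" "t \<le> C * s ^ c + 1" "t \<ge> 1"
    using Cs unfolding t_def by linarith+
  have "c = 0 \<longrightarrow> t \<le> C" by (simp add: t_def)
  moreover define r where "r = n div t + 1"
  moreover have "n \<le> 1 + r * t"
  proof -
    have "n mod t < t" using t(3) by simp
    then have "n \<le> n div t * t + t" using div_mult_mod_eq[of n t] by linarith
    then show ?thesis unfolding r_def by (simp add: algebra_simps)
  qed
  moreover have "real r \<le> n / t + 1"
    using of_nat_div_le_of_nat[of n t] unfolding r_def by simp
  then have "r + c * (t / C) powr (1 / c) \<le> Suc c * s + Suc c"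
    using perfect_step_exponent_le[OF _ s t(1,2)] C by simp
  ultimately show ?thesis using that t(3) unfolding s_def by blast
qed

text \<open>\<open>c (n / C)^(1/c)\<close> is the paper's \<open>D n^(1/c)\<close> with \<open>D = c / C^(1/c)\<close>. For \<open>c = 0\<close> the bound
  is a constant, but only for at most \<open>C\<close> inputs.\<close>

definition and_cost_bounded :: "('a, 'b) monoid_scheme \<Rightarrow> 'a set \<Rightarrow> nat \<Rightarrow> nat \<Rightarrow> bool" where
  "and_cost_bounded G A c C \<longleftrightarrow> (\<exists>K \<ge> 0. \<forall>n \<ge> 1. (c = 0 \<longrightarrow> n \<le> C) \<longrightarrow>
     and_generated G A {..<n} (K * 2 powr (real c * (real n / real C) powr (1 / real c))))"

context group
begin

lemma and_cost_bounded_subset: "A \<subseteq> carrier G \<Longrightarrow> and_cost_bounded G A 0 1"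
  unfolding and_cost_bounded_def
  using and_generated_singleton[of A 0] by (auto simp: lessThan_Suc intro!: exI[of _ 1])

lemma and_cost_bounded_lcs:
  assumes B: "B \<lhd> G" and C: "C \<ge> 1" and bounded: "and_cost_bounded G B c C"
  shows "and_cost_bounded G (lcs G B k) c (C * (k + 1))"
proof -
  obtain K where K: "K \<ge> 0" and gen: "\<And>t. t \<ge> 1 \<Longrightarrow> (c = 0 \<longrightarrow> t \<le> C) \<Longrightarrow>
      and_generated G B {..<t} (K * 2 powr (c * (t / C) powr (1 / c)))"
    using bounded unfolding and_cost_bounded_def by auto
  have "and_generated G (lcs G B k) {..<n} (4 ^ k * K * 2 powr c * 2 powr (c * (n / (C * (k + 1))) powr (1 / c)))"
    if n: "n \<ge> 1" "c = 0 \<longrightarrow> n \<le> C * (k + 1)" for n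
  proof -
    obtain t where t: "t \<ge> 1" "c = 0 \<longrightarrow> t \<le> C" "n \<le> (k + 1) * t"
      and exponent: "c * (t / C) powr (1 / c) \<le> c * (n / (C * (k + 1))) powr (1 / c) + c"
      using lcs_step_parameters[OF n(1) C n(2)] .
    have "and_generated G (lcs G B k) {..<(k + 1) * t} (4 ^ k * (K * 2 powr (c * (t / C) powr (1 / c))))"
      using and_generated_lcs[OF B gen[OF t(1,2)]] K by simp
    then have "and_generated G (lcs G B k) {..<n} (4 ^ k * (K * 2 powr (c * (t / C) powr (1 / c))))"
      using and_generated_shrink n(1) t(3) by blast
    moreover have "4 ^ k * (K * 2 powr (c * (t / C) powr (1 / c)))
        \<le> 4 ^ k * K * 2 powr c * 2 powr (c * (n / (C * (k + 1))) powr (1 / c))"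
      using exponent K by (simp add: powr_add[symmetric] mult_left_mono)
    ultimately show ?thesis using and_generated_mono by blast
  qed
  then show ?thesis
    unfolding and_cost_bounded_def using K by (intro exI[of _ "4 ^ k * K * 2 powr c"]) auto
qed

lemma and_cost_bounded_perfect:
  assumes A: "A \<lhd> G" and B: "B \<lhd> G" and perfect: "comm_subgroup G A B = A"
    and C: "C \<ge> 1" and bounded: "and_cost_bounded G B c C"
  shows "and_cost_bounded G A (Suc c) C"
proof -
  obtain K where K: "K \<ge> 0" and gen: "\<And>t. t \<ge> 1 \<Longrightarrow> (c = 0 \<longrightarrow> t \<le> C) \<Longrightarrow>
      and_generated G B {..<t} (K * 2 powr (c * (t / C) powr (1 / c)))"
    using bounded unfolding and_cost_bounded_def by auto
  have "and_generated G A {..<n} ((1 + 2 * K) * 2 powr Suc c * 2 powr (Suc c * (n / C) powr (1 / Suc c)))"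
    if n: "n \<ge> 1" for n
  proof -
    obtain t r where t: "t \<ge> 1" "c = 0 \<longrightarrow> t \<le> C" "n \<le> 1 + r * t"
      and exponent: "r + c * (t / C) powr (1 / c) \<le> Suc c * (n / C) powr (1 / Suc c) + Suc c"
      using perfect_step_parameters[OF n C] .
    define E where "E = (2::real) powr (c * (t / C) powr (1 / c))"
    have E: "E \<ge> 1" unfolding E_def using C by (intro ge_one_powr_ge_zero) auto
    have "and_generated G A {..<1 + r * t} (2 ^ r * (1 + 2 * (K * E)) - 2 * (K * E))"
      using and_generated_perfect[OF A B perfect gen[OF t(1,2)]] unfolding E_def .
    then have gen_n: "and_generated G A {..<n} (2 ^ r * (1 + 2 * (K * E)) - 2 * (K * E))"
      using and_generated_shrink n t(3) by blast
    have "2 ^ r * (1 + 2 * (K * E)) - 2 * (K * E) \<le> 2 ^ r * (1 + 2 * (K * E))"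
      using K E by simp
    also have "\<dots> \<le> 2 ^ r * ((1 + 2 * K) * E)"
      using E by (intro mult_left_mono) (simp_all add: algebra_simps)
    also have "\<dots> = (1 + 2 * K) * 2 powr (r + c * (t / C) powr (1 / c))"
      by (simp add: E_def powr_add powr_realpow)
    also have "\<dots> \<le> (1 + 2 * K) * 2 powr (Suc c * (n / C) powr (1 / Suc c) + Suc c)"
      using exponent K by (intro mult_left_mono) auto
    also have "\<dots> = (1 + 2 * K) * 2 powr Suc c * 2 powr (Suc c * (n / C) powr (1 / Suc c))"
      by (simp add: powr_add)
    finally show ?thesis using gen_n and_generated_mono by blast
  qed
  then show ?thesis
    unfolding and_cost_bounded_def using K by (intro exI[of _ "(1 + 2 * K) * 2 powr Suc c"]) auto
qed

lemma and_cost_bounded_series: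
  assumes fin: "finite (carrier G)" and top: "H m = carrier G" and normal: "\<forall>i\<le>m. H i \<lhd> G"
    and series: "\<forall>i<m. H i = lcs_e G (H (Suc i)) (k i)" and "i \<le> m"
  shows "and_cost_bounded G (H i) (card {j \<in> {i..<m}. k j = \<infinity>})
           (\<Prod>j \<in> {j \<in> {i..<m}. k j < \<infinity>}. the_enat (k j) + 1)"
  using \<open>i \<le> m\<close>
proof (induction rule: inc_induct)
  case base
  show ?case using and_cost_bounded_subset[of "H m"] top by simp
next
  case (step i)
  have filter_split: "{j \<in> {i..<m}. P j} = (if P i then insert i {j \<in> {Suc i..<m}. P j} else {j \<in> {Suc i..<m}. P j})"
    for P
  proof -
    have "{i..<m} = insert i {Suc i..<m}" using step.hyps(2) by auto
    then show ?thesis by auto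
  qed
  have HS: "H (Suc i) \<lhd> G" and Hi: "H i \<lhd> G" using normal step.hyps(2) by auto
  have C: "(\<Prod>j \<in> {j \<in> {Suc i..<m}. k j < \<infinity>}. the_enat (k j) + 1) \<ge> 1"
    by (rule prod_ge_1) simp
  show ?case
  proof (cases "k i")
    case (enat kk)
    then have "H i = lcs G (H (Suc i)) kk" using series step.hyps(2) by (simp add: lcs_e_def)
    then show ?thesis
      using and_cost_bounded_lcs[OF HS C step.IH, of kk] enat
      by (simp only: filter_split[of "\<lambda>j. k j = \<infinity>"] filter_split[of "\<lambda>j. k j < \<infinity>"]) (simp add: mult.commute)
  next
    case infinity
    then have "comm_subgroup G (H i) (H (Suc i)) = H i"
      using series step.hyps(2) nil_residual_perfect[OF fin HS] by (simp add: lcs_e_def)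
    then show ?thesis
      using and_cost_bounded_perfect[OF Hi HS _ C step.IH] infinity
      by (simp only: filter_split[of "\<lambda>j. k j = \<infinity>"] filter_split[of "\<lambda>j. k j < \<infinity>"]) simp
  qed
qed

lemma and_cost_bounded_programs:
  assumes bounded: "and_cost_bounded G A c C" and "c \<ge> 1" "C \<ge> 1"
    and A: "subgroup A G" "A \<noteq> {\<one>}"
  obtains K where "\<And>n. n \<ge> 1 \<Longrightarrow> \<exists>g P. g \<in> A \<and> g \<noteq> \<one> \<and> program_over G {..<n} P \<and>
      real (length P) \<le> K * 2 powr (real c / real C powr (1 / real c) * real n powr (1 / real c)) \<and>
      (\<forall>\<sigma>. eval_program G \<sigma> P = (if \<forall>j<n. \<sigma> j then g else \<one>))"
proof -
  obtain K where gen: "\<And>n. n \<ge> 1 \<Longrightarrow>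
      and_generated G A {..<n} (K * 2 powr (real c * (real n / real C) powr (1 / real c)))"
    using bounded \<open>c \<ge> 1\<close> unfolding and_cost_bounded_def by auto
  have exponent: "real c * (real n / real C) powr (1 / real c) =
      real c / real C powr (1 / real c) * real n powr (1 / real c)" for n
    by (simp add: powr_divide)
  show ?thesis
  proof (rule that)
    fix n :: nat assume "n \<ge> 1"
    then obtain g where g: "g \<in> A" "g \<noteq> \<one>"
      "computes_and G {..<n} (K * 2 powr (real c * (real n / real C) powr (1 / real c))) g"
      using and_generated_nontrivial[OF gen A] by blast
    moreover have "(\<forall>j\<in>{..<n}. \<sigma> j) \<longleftrightarrow> (\<forall>j<n. \<sigma> j)" for \<sigma> :: "nat \<Rightarrow> bool"
      by auto
    ultimately show "\<exists>g P. g \<in> A \<and> g \<noteq> \<one> \<and> program_over G {..<n} P \<and>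
      real (length P) \<le> K * 2 powr (real c / real C powr (1 / real c) * real n powr (1 / real c)) \<and>
      (\<forall>\<sigma>. eval_program G \<sigma> P = (if \<forall>j<n. \<sigma> j then g else \<one>))"
      unfolding computes_and_def exponent by metis
  qed
qed

end

theorem proposition3p1:
  fixes G :: "('a, 'b) monoid_scheme"
    and H :: "nat \<Rightarrow> 'a set" and k :: "nat \<Rightarrow> enat" and m :: nat
  assumes "group G" and "finite (carrier G)" and "solvable G"
    and "H 0 = {\<one>\<^bsub>G\<^esub>}" and "H m = carrier G"
    and "\<forall>i\<le>m. H i \<lhd> G"
    and "\<forall>i<m. H i \<subset> H (Suc i)"
    and "k 0 = \<infinity>"
    and "\<forall>i<m. H i = lcs_e G (H (Suc i)) (k i)"
    and "\<exists>i\<in>{1..<m}. k i = \<infinity>"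
  defines "c \<equiv> card {i \<in> {1..<m}. k i = \<infinity>}"
    and "C \<equiv> (\<Prod>i\<in>{i \<in> {1..<m}. k i < \<infinity>}. the_enat (k i) + 1)"
  defines "D \<equiv> real c / (real C) powr (1 / real c)"
  shows "\<exists>K::real. \<forall>n::nat. n \<ge> 1 \<longrightarrow>
           (\<exists>g Q. g \<in> carrier G \<and> g \<noteq> \<one>\<^bsub>G\<^esub> \<and> is_program G n Q \<and>
              real (length Q) \<le> K * 2 powr (D * real n powr (1 / real c)) \<and>
              (\<forall>\<sigma>. eval_program G \<sigma> Q = (if \<forall>i<n. \<sigma> i then g else \<one>\<^bsub>G\<^esub>)))"
proof -
  interpret group G by fact
  have m: "1 \<le> m" using assms(10) by auto
  have "and_cost_bounded G (H 1) c C"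
    unfolding c_def C_def using and_cost_bounded_series[OF assms(2,5,6,9) m] .
  moreover have "c \<ge> 1"
    using assms(10) unfolding c_def by (auto simp: Suc_le_eq card_gt_0_iff)
  moreover have "C \<ge> 1"
    unfolding C_def by (rule prod_ge_1) simp
  moreover have H1: "subgroup (H 1) G" "H 1 \<noteq> {\<one>\<^bsub>G\<^esub>}"
    using assms(4,6,7) m normal_imp_subgroup by force+
  ultimately obtain K where K: "\<And>n. n \<ge> 1 \<Longrightarrow> \<exists>g P. g \<in> H 1 \<and> g \<noteq> \<one>\<^bsub>G\<^esub> \<and> program_over G {..<n} P \<and>
      real (length P) \<le> K * 2 powr (D * real n powr (1 / real c)) \<and>
      (\<forall>\<sigma>. eval_program G \<sigma> P = (if \<forall>j<n. \<sigma> j then g else \<one>\<^bsub>G\<^esub>))"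
    unfolding D_def by (rule and_cost_bounded_programs) blast
  then show ?thesis
    using subgroup.subset[OF H1(1)] unfolding is_program_iff_program_over by blast
qed

end
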